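(* Let $p \geqslant 3$ be a prime, $d \geqslant 2$, and $V$ a $d$-dimensional vector space over $\mathbb{F}_p$. Let $G = \mathrm{Sym}(V)$ and $H = \mathrm{AGL}(V)$. Let $W$ be a proper non-trivial subspace of $V$ and let $K < \mathrm{GL}(V)$ be the setwise stabiliser of $W$ in $\mathrm{GL}(V)$. Then there exists $x \in G$ such that $H \cap H^x = K$.
   Context: $\mathrm{AGL}(V)$ is the group of invertible affine transformations $\mathbf{v} \mapsto \mathbf{v}g + \mathbf{u}$ ($g \in \mathrm{GL}(V)$, $\mathbf{u} \in V$) of $V$, regarded as a subgroup of $\mathrm{Sym}(V)$; $\mathrm{GL}(V)$ is the subgroup of linear maps. *)

theory Defs
  imports "HOL-Analysis.Analysis"
begin

definition Sym_V :: "(('a::field) ^ 'n \<Rightarrow> 'a ^ 'n) set" where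
  "Sym_V = {f. bij f}"

definition GL_V :: "(('a::field) ^ 'n \<Rightarrow> 'a ^ 'n) set" where
  "GL_V = {g. bij g \<and> (\<forall>x y. g (x + y) = g x + g y) \<and> (\<forall>c x. g (c *s x) = c *s g x)}"

definition AGL_V :: "(('a::field) ^ 'n \<Rightarrow> 'a ^ 'n) set" where
  "AGL_V = {(\<lambda>v. g v + u) | g u. g \<in> GL_V}"

definition is_subspace_V :: "(('a::field) ^ 'n) set \<Rightarrow> bool" where
  "is_subspace_V W \<longleftrightarrow> 0 \<in> W \<and> (\<forall>x\<in>W. \<forall>y\<in>W. x + y \<in> W) \<and> (\<forall>c. \<forall>x\<in>W. c *s x \<in> W)"

definition GL_stab :: "(('a::field) ^ 'n) set \<Rightarrow> ('a ^ 'n \<Rightarrow> 'a ^ 'n) set" where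
  "GL_stab W = {g \<in> GL_V. g ` W = W}"

text \<open>Conjugate H^x = x^{-1} H x with maps acting on the right (v \<mapsto> v h),
  so as functions composed right-to-left, h^x = x \<circ> h \<circ> x^{-1}.\<close>
definition conj_set :: "('b \<Rightarrow> 'b) set \<Rightarrow> ('b \<Rightarrow> 'b) \<Rightarrow> ('b \<Rightarrow> 'b) set" where
  "conj_set H x = {x \<circ> h \<circ> inv x | h. h \<in> H}"

end

theory Submission
  imports Defs
begin

(*
  The witness is the permutation x = scale_on W c for a scalar c other than 0 and 1: it
  multiplies the vectors of W by c and fixes all other vectors. Linear maps stabilising W
  commute with x. Conversely, let k = x h x^-1 with k, h affine. Since x moves each vector
  only within its coset of W, k and h agree modulo W; comparing them on W and off W shows
  that their linear parts preserve W, that the translation of h lies in W, and finally,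
  as c is not 1, that both translations vanish.
*)

definition scale_on :: "('a::field ^ 'n) set \<Rightarrow> 'a \<Rightarrow> 'a ^ 'n \<Rightarrow> 'a ^ 'n" where
  "scale_on W c v = (if v \<in> W then c *s v else v)"

lemma is_subspace_V_iff_subspace: "is_subspace_V W \<longleftrightarrow> vec.subspace W"
  by (simp add: is_subspace_V_def vec.subspace_def)

lemma GL_V_iff: "g \<in> GL_V \<longleftrightarrow> bij g \<and> Vector_Spaces.linear (*s) (*s) g"
  by (auto simp: GL_V_def Vector_Spaces.linear_iff vec.vector_space_axioms)

lemma GL_V_subset_AGL_V: "GL_V \<subseteq> AGL_V"
  unfolding AGL_V_def by force

lemma subspace_add_mem_iff:
  "vec.subspace W \<Longrightarrow> w \<in> W \<Longrightarrow> v + w \<in> W \<longleftrightarrow> v \<in> W"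
  by (metis add_diff_cancel vec.subspace_add vec.subspace_diff)

lemma subspace_scale_mem_iff:
  fixes v :: "'a::field ^ 'n"
  shows "vec.subspace W \<Longrightarrow> c \<noteq> 0 \<Longrightarrow> c *s v \<in> W \<longleftrightarrow> v \<in> W"
  by (metis vec.subspace_scale vector_smult_assoc left_inverse vector_smult_lid)

lemma scale_on_minus_mem: "vec.subspace W \<Longrightarrow> scale_on W c v - v \<in> W"
  by (simp add: scale_on_def vec.subspace_0 vec.subspace_diff vec.subspace_scale)

lemma scale_on_inverse:
  "vec.subspace W \<Longrightarrow> c \<noteq> 0 \<Longrightarrow> scale_on W c (scale_on W (inverse c) v) = v"
  by (simp add: scale_on_def subspace_scale_mem_iff)

lemma bij_scale_on: "vec.subspace W \<Longrightarrow> c \<noteq> 0 \<Longrightarrow> bij (scale_on W c)"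
  using scale_on_inverse[of W c] scale_on_inverse[of W "inverse c"]
  by (intro o_bij[of "scale_on W (inverse c)"]) (auto simp: fun_eq_iff)

lemma scale_on_commute:
  assumes "Vector_Spaces.linear (*s) (*s) k" "inj k" "k ` W = W"
  shows "k (scale_on W c v) = scale_on W c (k v)"
  using assms by (metis inj_image_mem_iff scale_on_def vec.linear_scale)

lemma GL_stab_subset_AGL_inter_conj_scale_on:
  assumes "vec.subspace W" "c \<noteq> 0"
  shows "GL_stab W \<subseteq> AGL_V \<inter> conj_set AGL_V (scale_on W c)"
proof
  fix k assume "k \<in> GL_stab W"
  then have k: "k \<in> GL_V" "k ` W = W" by (auto simp: GL_stab_def)
  then have "k \<circ> scale_on W c = scale_on W c \<circ> k"
    by (auto simp: fun_eq_iff GL_V_iff bij_is_inj scale_on_commute)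
  then have "k = scale_on W c \<circ> k \<circ> inv (scale_on W c)"
    using bij_scale_on[OF assms] by (metis bij_is_surj comp_id o_assoc surj_iff)
  moreover have "k \<in> AGL_V" using k GL_V_subset_AGL_V by blast
  ultimately show "k \<in> AGL_V \<inter> conj_set AGL_V (scale_on W c)"
    unfolding conj_set_def by blast
qed

lemma linear_parts_preserve_subspace:
  fixes g g' :: "'a::field ^ 'n \<Rightarrow> 'a ^ 'n"
  assumes W: "vec.subspace W" "W \<noteq> UNIV" and "c \<noteq> 1"
    and g: "Vector_Spaces.linear (*s) (*s) g" and g': "Vector_Spaces.linear (*s) (*s) g'"
    and cong: "\<And>v. g (scale_on W c v) + u - (g' v + t) \<in> W"
    and w: "w \<in> W"
  shows "g w \<in> W \<and> g' w \<in> W"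
proof -
  obtain a where a: "a \<notin> W" using W(2) by blast
  moreover have "a + w \<notin> W" using a subspace_add_mem_iff[OF W(1) w] by blast
  ultimately have "(g (a + w) + u - (g' (a + w) + t)) - (g a + u - (g' a + t)) \<in> W"
    using vec.subspace_diff[OF W(1) cong[of "a + w"] cong[of a]] by (simp add: scale_on_def)
  then have linear_parts_congruent: "g w - g' w \<in> W"
    by (simp add: vec.linear_add[OF g] vec.linear_add[OF g'] algebra_simps)
  have "u - t \<in> W"
    using cong[of 0] W(1)
    by (simp add: vec.linear_0[OF g] vec.linear_0[OF g'] scale_on_def vec.subspace_0)
  moreover have "c *s g w + u - (g' w + t) \<in> W"
    using cong[of w] w by (simp add: scale_on_def vec.linear_scale[OF g])
  ultimately have "(c *s g w + u - (g' w + t)) - (u - t) - (g w - g' w) \<in> W"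
    using W(1) linear_parts_congruent by (blast intro: vec.subspace_diff)
  then have "(c - 1) *s g w \<in> W"
    by (simp add: vector_sub_rdistrib algebra_simps)
  moreover have "c - 1 \<noteq> 0" using \<open>c \<noteq> 1\<close> by simp
  ultimately have "g w \<in> W" using subspace_scale_mem_iff[OF W(1)] by blast
  moreover have "g w - (g w - g' w) \<in> W"
    using vec.subspace_diff[OF W(1) \<open>g w \<in> W\<close> linear_parts_congruent] .
  ultimately show ?thesis by simp
qed

lemma linear_parts_eq_on_subspace:
  fixes g g' :: "'a::field ^ 'n \<Rightarrow> 'a ^ 'n"
  assumes W: "vec.subspace W"
    and g: "Vector_Spaces.linear (*s) (*s) g"
    and g': "Vector_Spaces.linear (*s) (*s) g'" "g' ` W \<subseteq> W"
    and eq: "\<And>v. g (scale_on W c v) + u = scale_on W c (g' v + t)"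
    and v: "v \<notin> W" "g' v + t \<notin> W" and w: "w \<in> W"
  shows "g w = g' w"
proof -
  have "g' w \<in> W" using g'(2) w by blast
  have "v + w \<notin> W" using v(1) subspace_add_mem_iff[OF W w] by blast
  moreover have "g' (v + w) + t \<notin> W"
  proof -
    have "g' (v + w) + t = (g' v + t) + g' w"
      by (simp add: vec.linear_add[OF g'(1)] algebra_simps)
    then show ?thesis using v(2) subspace_add_mem_iff[OF W \<open>g' w \<in> W\<close>] by metis
  qed
  ultimately have "g (v + w) + u = g' (v + w) + t"
    using eq[of "v + w"] by (simp add: scale_on_def)
  moreover have "g v + u = g' v + t"
    using eq[of v] v by (simp add: scale_on_def)
  ultimately have "(g (v + w) + u) - (g v + u) = (g' (v + w) + t) - (g' v + t)" by simp
  then show ?thesis by (simp add: vec.linear_add[OF g] vec.linear_add[OF g'(1)])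
qed

lemma translation_mem_subspace:
  fixes g g' :: "'a::field ^ 'n \<Rightarrow> 'a ^ 'n"
  assumes W: "vec.subspace W" "W \<noteq> {0}" and c: "c \<noteq> 0" "c \<noteq> 1"
    and g: "Vector_Spaces.linear (*s) (*s) g" "inj g"
    and g': "Vector_Spaces.linear (*s) (*s) g'" "surj g'" "g' ` W \<subseteq> W"
    and eq: "\<And>v. g (scale_on W c v) + u = scale_on W c (g' v + t)"
  shows "t \<in> W"
proof (rule ccontr)
  assume t: "t \<notin> W"
  have shifted_notin: "g' v + t \<notin> W" if "g' v \<in> W" for v
    using t that subspace_add_mem_iff[OF W(1)] by (metis add.commute)
  have "u = t"
    using eq[of 0] shifted_notin[of 0] W(1)
    by (simp add: vec.linear_0[OF g(1)] vec.linear_0[OF g'(1)] vec.subspace_0 scale_on_def)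
  obtain v where v: "g' v = (c - 1) *s t" using g'(2) by (metis surjD)
  moreover have "c - 1 \<noteq> 0" using c(2) by simp
  ultimately have "g' v \<notin> W" using t subspace_scale_mem_iff[OF W(1)] by metis
  then have "v \<notin> W" using g'(3) by blast
  have "g' v + t = c *s t" by (simp add: v vector_sub_rdistrib)
  then have "g' v + t \<notin> W" using t c(1) subspace_scale_mem_iff[OF W(1)] by simp
  obtain w where w: "w \<in> W" "w \<noteq> 0" using W(1,2) vec.subspace_0 by blast
  then have "g' w \<in> W" using g'(3) by blast
  have "g w = g' w"
    using linear_parts_eq_on_subspace[OF W(1) g(1) g'(1,3) eq \<open>v \<notin> W\<close> \<open>g' v + t \<notin> W\<close> w(1)] .
  \<comment> \<open>as t is not in W, the map g' + t moves W off W, so on W only the left side of eq is scaled\<close>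
  moreover have "c *s g w + u = g' w + t"
    using eq[of w] w(1) shifted_notin[of w] \<open>g' w \<in> W\<close>
    by (simp add: scale_on_def vec.linear_scale[OF g(1)])
  ultimately have "c *s g w = 1 *s g w" using \<open>u = t\<close> by simp
  then have "g w = g 0" using c(2) by (metis vec.scale_cancel_right vec.linear_0[OF g(1)])
  then show False using g(2) w(2) by (simp add: inj_eq)
qed

lemma translation_eq_zero:
  fixes g g' :: "'a::field ^ 'n \<Rightarrow> 'a ^ 'n"
  assumes W: "vec.subspace W" "W \<noteq> UNIV" and c: "c \<noteq> 0" "c \<noteq> 1"
    and g: "Vector_Spaces.linear (*s) (*s) g"
    and g': "Vector_Spaces.linear (*s) (*s) g'" "\<And>a. a \<notin> W \<Longrightarrow> g' a \<notin> W"
    and t: "t \<in> W"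
    and eq: "\<And>v. g (scale_on W c v) + u = scale_on W c (g' v + t)"
  shows "t = 0 \<and> u = 0"
proof -
  have u: "u = c *s t"
    using eq[of 0] t W(1)
    by (simp add: vec.linear_0[OF g] vec.linear_0[OF g'(1)] scale_on_def vec.subspace_0)
  obtain a where a: "a \<notin> W" using W(2) by blast
  have shifted_notin: "g' b + t \<notin> W" if "b \<notin> W" for b
    using g'(2)[OF that] subspace_add_mem_iff[OF W(1) t] by blast
  have "c *s a \<notin> W" using a c(1) subspace_scale_mem_iff[OF W(1)] by simp
  have e1: "g a + c *s t = g' a + t"
    using eq[of a] a shifted_notin[OF a] u by (simp add: scale_on_def)
  have e2: "c *s g a + c *s t = c *s g' a + t"
    using eq[of "c *s a"] \<open>c *s a \<notin> W\<close> shifted_notin[OF \<open>c *s a \<notin> W\<close>] u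
    by (simp add: scale_on_def vec.linear_scale[OF g] vec.linear_scale[OF g'(1)])
  \<comment> \<open>c times e1 minus e2\<close>
  have "((c - 1) * (c - 1)) *s t = c *s (g a + c *s t - (g' a + t)) - (c *s g a + c *s t - (c *s g' a + t))"
    by (simp add: vec_eq_iff algebra_simps)
  also have "\<dots> = 0" using e1 e2 by simp
  finally have "t = 0" using c(2) by simp
  then show ?thesis using u by simp
qed

lemma AGL_inter_conj_scale_on_subset_GL_stab:
  fixes W :: "('a::{field,finite} ^ 'n) set"
  assumes W: "vec.subspace W" "W \<noteq> {0}" "W \<noteq> UNIV" and c: "c \<noteq> 0" "c \<noteq> 1"
  shows "AGL_V \<inter> conj_set AGL_V (scale_on W c) \<subseteq> GL_stab W"
proof
  let ?x = "scale_on W c"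
  fix k assume "k \<in> AGL_V \<inter> conj_set AGL_V ?x"
  then obtain g u h g' t where k: "k = (\<lambda>v. g v + u)" "g \<in> GL_V"
    and h: "h = (\<lambda>v. g' v + t)" "g' \<in> GL_V" and kh: "k = ?x \<circ> h \<circ> inv ?x"
    unfolding AGL_V_def conj_set_def by blast
  have eq: "g (?x v) + u = ?x (g' v + t)" for v
    using fun_cong[OF kh, of "?x v"] bij_scale_on[OF W(1) c(1)] k(1) h(1)
    by (simp add: bij_is_inj)
  have lin: "Vector_Spaces.linear (*s) (*s) g" "Vector_Spaces.linear (*s) (*s) g'"
    and bij: "bij g" "bij g'"
    using k(2) h(2) by (auto simp: GL_V_iff)
  have "g w \<in> W \<and> g' w \<in> W" if "w \<in> W" for w
    using linear_parts_preserve_subspace[OF W(1,3) c(2) lin] scale_on_minus_mem[OF W(1)] eq that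
    by (metis add_diff_cancel_left')
  then have "g ` W \<subseteq> W" "g' ` W \<subseteq> W" by auto
  then have gW: "g ` W = W" and g'W: "g' ` W = W"
    using endo_inj_surj[of W] bij_is_inj[OF bij(1)] bij_is_inj[OF bij(2)]
    by (simp_all add: inj_on_subset)
  have "t \<in> W"
    using translation_mem_subspace[OF W(1,2) c lin(1) _ lin(2) _ _ eq] bij g'W
    by (simp add: bij_is_inj bij_is_surj)
  then have "u = 0"
    using translation_eq_zero[OF W(1,3) c lin(1) lin(2) _ _ eq] g'W bij(2)
    by (metis bij_is_inj inj_image_mem_iff)
  then have "k = g" using k(1) by simp
  then show "k \<in> GL_stab W" using k(2) gW by (simp add: GL_stab_def)
qed

theorem lemma3p3:
  fixes W :: "('a::{field,finite} ^ 'n) set"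
  assumes "prime CARD('a)" and "CARD('a) \<ge> 3"
    and "CARD('n) \<ge> 2"
    and "is_subspace_V W" and "W \<noteq> {0}" and "W \<noteq> UNIV"
  shows "\<exists>x \<in> Sym_V. AGL_V \<inter> conj_set AGL_V x = GL_stab W"
proof -
  have W: "vec.subspace W" using assms(4) by (simp add: is_subspace_V_iff_subspace)
  have "card {0, 1 :: 'a} \<le> 2" by (simp add: card_insert_if)
  then have "{0, 1} \<noteq> (UNIV :: 'a set)" using assms(2) by force
  then obtain c :: 'a where c: "c \<noteq> 0" "c \<noteq> 1" by blast
  have "scale_on W c \<in> Sym_V" using bij_scale_on[OF W c(1)] by (simp add: Sym_V_def)
  moreover have "AGL_V \<inter> conj_set AGL_V (scale_on W c) = GL_stab W"
    using AGL_inter_conj_scale_on_subset_GL_stab[OF W assms(5,6) c]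
      GL_stab_subset_AGL_inter_conj_scale_on[OF W c(1)] by blast
  ultimately show ?thesis by blast
qed

end
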